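(* Let $\mathcal U(\mathbb R)$ be the family of open subsets of $\mathbb R$, and let $F:\mathcal U(\mathbb R)\to\mathcal U(\mathbb R)$ be a bijection satisfying $F(U_1\cap U_2)=F(U_1)\cap F(U_2)$ for all $U_1,U_2\in\mathcal U(\mathbb R)$. Then there exists a bijection $u:\mathbb R\to\mathbb R$ such that $F(U)=\{u(x):x\in U\}$ for every open $U\subset\mathbb R$. *)

theory Defs
  imports Complex_Main
begin

end

theory Submission
  imports Defs
begin

(* The argument works for
   arbitrary T1 spaces:
   (1) preserving intersections makes F monotone in both directions, i.e. an
       isomorphism of the lattices of open sets; in particular F UNIV = UNIV;
   (2) the coatoms of the lattice of open sets of a T1 space (maximal proper
       open sets) are exactly the complements of points, and an order
       isomorphism maps coatoms to coatoms;
   (3) hence F (- {x}) = - {u x} for a unique point u x; u is a bijection,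
       and x \<in> U \<longleftrightarrow> U \<notsubseteq> - {x} \<longleftrightarrow> F U \<notsubseteq> - {u x} \<longleftrightarrow> u x \<in> F U
       gives F U = u ` U.
   The general facts are developed in a locale for such F; the theorem for R is
   an instance. *)

definition open_coatom :: "'a::topological_space set \<Rightarrow> bool" where
  "open_coatom U \<longleftrightarrow> open U \<and> U \<noteq> UNIV \<and> (\<forall>V. open V \<longrightarrow> U \<subseteq> V \<longrightarrow> V = U \<or> V = UNIV)"

lemma open_coatom_iff_point_complement:
  fixes U :: "'a::t1_space set"
  shows "open_coatom U \<longleftrightarrow> (\<exists>x. U = - {x})"
proof
  assume coatom: "open_coatom U"
  then obtain x where "x \<notin> U" unfolding open_coatom_def by auto
  then have "U \<subseteq> - {x}" by auto
  moreover have "open (- {x})" by (simp add: open_Compl)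
  ultimately show "\<exists>x. U = - {x}" using coatom unfolding open_coatom_def by auto
next
  assume "\<exists>x. U = - {x}"
  then obtain x where U: "U = - {x}" by auto
  have "V = - {x} \<or> V = UNIV" if "- {x} \<subseteq> V" for V :: "'a set"
    using that by (cases "x \<in> V") auto
  then show "open_coatom U" unfolding open_coatom_def U by (auto simp: open_Compl)
qed

locale open_lattice_iso =
  fixes F :: "'a::t1_space set \<Rightarrow> 'b::t1_space set"
  assumes bij: "bij_betw F {U. open U} {U. open U}"
    and inter: "\<And>U1 U2. open U1 \<Longrightarrow> open U2 \<Longrightarrow> F (U1 \<inter> U2) = F U1 \<inter> F U2"
begin

lemma open_image: "open U \<Longrightarrow> open (F U)"
  using bij unfolding bij_betw_def by auto

lemma inj: "open U \<Longrightarrow> open V \<Longrightarrow> F U = F V \<Longrightarrow> U = V"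
  using bij unfolding bij_betw_def inj_on_def by auto

lemma surj: "open V \<Longrightarrow> \<exists>U. open U \<and> V = F U"
  using bij unfolding bij_betw_def by auto

text \<open>Inclusion is definable from intersection, so F is an order isomorphism.\<close>

lemma subset_iff:
  assumes "open U" "open V"
  shows "F U \<subseteq> F V \<longleftrightarrow> U \<subseteq> V"
proof -
  have "U \<subseteq> V \<longleftrightarrow> U \<inter> V = U" by blast
  also have "\<dots> \<longleftrightarrow> F (U \<inter> V) = F U"
    using inj[of "U \<inter> V" U] assms by (auto simp: open_Int)
  also have "\<dots> \<longleftrightarrow> F U \<subseteq> F V" using inter[OF assms] by blast
  finally show ?thesis by blast
qed

text \<open>The top element is preserved: the preimage of UNIV is an open set above all others.\<close>

lemma UNIV: "F UNIV = UNIV"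
proof -
  obtain W where W: "open W" "UNIV = F W" using surj[of UNIV] by auto
  then have "F W \<subseteq> F UNIV" using subset_iff[OF W(1) open_UNIV] by auto
  then show ?thesis using W by auto
qed

text \<open>Being a coatom is an order-theoretic property, hence preserved and reflected by F.\<close>

lemma open_coatom_image:
  assumes "open U"
  shows "open_coatom (F U) \<longleftrightarrow> open_coatom U"
proof -
  have top: "F V = UNIV \<longleftrightarrow> V = UNIV" if "open V" for V
    using inj[OF that open_UNIV] UNIV by auto
  have "(\<forall>V'. open V' \<longrightarrow> F U \<subseteq> V' \<longrightarrow> V' = F U \<or> V' = UNIV)
    \<longleftrightarrow> (\<forall>V. open V \<longrightarrow> F U \<subseteq> F V \<longrightarrow> F V = F U \<or> F V = UNIV)"
    (is "?maximal_image \<longleftrightarrow> _")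
    using surj open_image by metis
  also have "\<dots> \<longleftrightarrow> (\<forall>V. open V \<longrightarrow> U \<subseteq> V \<longrightarrow> V = U \<or> V = UNIV)"
    (is "_ \<longleftrightarrow> ?maximal")
    using subset_iff[OF assms] inj[OF _ assms] top by metis
  finally have "?maximal_image \<longleftrightarrow> ?maximal" .
  then show ?thesis
    unfolding open_coatom_def using open_image[OF assms] top[OF assms] assms by simp
qed

lemma point_complement_image: "\<exists>y. F (- {x}) = - {y}"
proof -
  have "open_coatom (- {x})" by (auto simp: open_coatom_iff_point_complement)
  then have "open_coatom (F (- {x}))" by (simp add: open_coatom_image open_Compl)
  then show ?thesis by (simp add: open_coatom_iff_point_complement)
qed

definition point_map :: "'a \<Rightarrow> 'b" where
  "point_map x = (SOME y. F (- {x}) = - {y})"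

lemma point_map: "F (- {x}) = - {point_map x}"
  unfolding point_map_def by (rule someI_ex[OF point_complement_image])

text \<open>Membership is expressed by inclusion in a point complement, so it is transported by F.\<close>

lemma mem_iff: "open U \<Longrightarrow> point_map x \<in> F U \<longleftrightarrow> x \<in> U"
  using subset_iff[of U "- {x}"] point_map[of x] by (auto simp: open_Compl)

lemma bij_point_map: "bij point_map"
proof (rule bijI)
  show "inj point_map"
  proof (rule injI)
    fix x y assume "point_map x = point_map y"
    then have "F (- {x}) = F (- {y})" by (simp add: point_map)
    then have "- {x} = - {y}" using inj[of "- {x}" "- {y}"] by (simp add: open_Compl)
    then show "x = y" by auto
  qed
  show "surj point_map"
    unfolding surj_def
  proof
    fix y :: 'b
    obtain W where W: "open W" "- {y} = F W" using surj[of "- {y}"] by (auto simp: open_Compl)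
    then have "open_coatom W"
      using open_coatom_image[OF W(1)] by (auto simp: open_coatom_iff_point_complement)
    then obtain x where "W = - {x}" by (auto simp: open_coatom_iff_point_complement)
    then have "- {y} = - {point_map x}" using W point_map by simp
    then show "\<exists>x. y = point_map x" by auto
  qed
qed

lemma image_point_map:
  assumes "open U"
  shows "F U = point_map ` U"
proof
  show "point_map ` U \<subseteq> F U" using mem_iff[OF assms] by auto
  show "F U \<subseteq> point_map ` U"
  proof
    fix y assume y: "y \<in> F U"
    obtain x where "y = point_map x" using bij_point_map unfolding bij_def surj_def by blast
    with y show "y \<in> point_map ` U" using mem_iff[OF assms] by auto
  qed
qed

end

theorem lemmaB1:
  fixes F :: "real set \<Rightarrow> real set"
  assumes bij: "bij_betw F {U. open U} {U. open U}"
    and inter: "\<And>U1 U2. open U1 \<Longrightarrow> open U2 \<Longrightarrow> F (U1 \<inter> U2) = F U1 \<inter> F U2"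
  shows "\<exists>u :: real \<Rightarrow> real. bij u \<and> (\<forall>U. open U \<longrightarrow> F U = u ` U)"
proof -
  interpret open_lattice_iso F using bij inter by unfold_locales
  show ?thesis using bij_point_map image_point_map by blast
qed

end
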